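(* Fix a real parameter $k$. Let $G$ be a topology that is weakly consistent (with respect to $k$) and physically connected. Then $G$ is weakly connected, i.e., for any two nodes $u,v$ of $G$ there is a directed path from $u$ to $v$ consisting only of links that are active or unclassified.
   Context: A topology is a finite directed graph $G=(V,E)$ whose links $e\in E$ carry a real weight $w(e)$ and a state $s(e)\in\{\mathrm{active},\mathrm{inactive},\mathrm{unclassified}\}$; a link is classified if it is active or inactive. A path is a finite sequence of links in which the target of each link is the source of the next. $G$ is physically connected if between any two nodes there is a directed path of links in arbitrary state. $G$ is structurally consistent if it has no loops and no parallel links (two distinct links with the same source and target). For a link $ab$ from $a$ to $b$, a triangle for $ab$ is a node $c\notin\{a,b\}$ with classified links $ac$ and $cb$ such that $w(ab)>\max(w(ac),w(cb))$ and $w(ab)\ge k\cdot\min(w(ac),w(cb))$. Inactive-link constraint: every inactive link has a triangle. Active-link constraint: no active link has a triangle. $G$ is weakly consistent if it is structurally consistent and fulfills both the active-link and inactive-link constraints. *)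

theory Defs
  imports Complex_Main
begin

datatype link_state = Active | Inactive | Unclassified

text \<open>A topology: a finite directed graph with nodes of type 'n and links of type 'e
  (links are first-class objects, so parallel links and loops are representable),
  each link carrying a source, a target, a real weight and a state.\<close>
record ('n, 'e) topology =
  nodes :: "'n set"
  links :: "'e set"
  src :: "'e \<Rightarrow> 'n"
  tgt :: "'e \<Rightarrow> 'n"
  weight :: "'e \<Rightarrow> real"
  state :: "'e \<Rightarrow> link_state"

definition topology :: "('n, 'e, 'x) topology_scheme \<Rightarrow> bool" where
  "topology G \<longleftrightarrow> finite (nodes G) \<and> finite (links G) \<and>
     (\<forall>e \<in> links G. src G e \<in> nodes G \<and> tgt G e \<in> nodes G)"

definition classified :: "('n, 'e, 'x) topology_scheme \<Rightarrow> 'e \<Rightarrow> bool" where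
  "classified G e \<longleftrightarrow> state G e = Active \<or> state G e = Inactive"

fun is_path :: "('n, 'e, 'x) topology_scheme \<Rightarrow> 'n \<Rightarrow> 'e list \<Rightarrow> 'n \<Rightarrow> bool" where
  "is_path G u [] v \<longleftrightarrow> u = v"
| "is_path G u (e # es) v \<longleftrightarrow> e \<in> links G \<and> src G e = u \<and> is_path G (tgt G e) es v"

definition physically_connected :: "('n, 'e, 'x) topology_scheme \<Rightarrow> bool" where
  "physically_connected G \<longleftrightarrow>
     (\<forall>u \<in> nodes G. \<forall>v \<in> nodes G. \<exists>p. is_path G u p v)"

definition weakly_connected :: "('n, 'e, 'x) topology_scheme \<Rightarrow> bool" where
  "weakly_connected G \<longleftrightarrow>
     (\<forall>u \<in> nodes G. \<forall>v \<in> nodes G. \<exists>p. is_path G u p v \<and>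
        (\<forall>e \<in> set p. state G e = Active \<or> state G e = Unclassified))"

definition structurally_consistent :: "('n, 'e, 'x) topology_scheme \<Rightarrow> bool" where
  "structurally_consistent G \<longleftrightarrow>
     (\<forall>e \<in> links G. src G e \<noteq> tgt G e) \<and>
     (\<forall>e \<in> links G. \<forall>e' \<in> links G.
        src G e = src G e' \<and> tgt G e = tgt G e' \<longrightarrow> e = e')"

definition is_triangle :: "real \<Rightarrow> ('n, 'e, 'x) topology_scheme \<Rightarrow> 'e \<Rightarrow> 'n \<Rightarrow> bool" where
  "is_triangle k G e c \<longleftrightarrow> c \<in> nodes G \<and> c \<noteq> src G e \<and> c \<noteq> tgt G e \<and>
     (\<exists>e1 \<in> links G. \<exists>e2 \<in> links G.
        src G e1 = src G e \<and> tgt G e1 = c \<and> src G e2 = c \<and> tgt G e2 = tgt G e \<and>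
        classified G e1 \<and> classified G e2 \<and>
        weight G e > max (weight G e1) (weight G e2) \<and>
        weight G e \<ge> k * min (weight G e1) (weight G e2))"

definition has_triangle :: "real \<Rightarrow> ('n, 'e, 'x) topology_scheme \<Rightarrow> 'e \<Rightarrow> bool" where
  "has_triangle k G e \<longleftrightarrow> (\<exists>c. is_triangle k G e c)"

definition inactive_link_constraint :: "real \<Rightarrow> ('n, 'e, 'x) topology_scheme \<Rightarrow> bool" where
  "inactive_link_constraint k G \<longleftrightarrow>
     (\<forall>e \<in> links G. state G e = Inactive \<longrightarrow> has_triangle k G e)"

definition active_link_constraint :: "real \<Rightarrow> ('n, 'e, 'x) topology_scheme \<Rightarrow> bool" where
  "active_link_constraint k G \<longleftrightarrow>
     (\<forall>e \<in> links G. state G e = Active \<longrightarrow> \<not> has_triangle k G e)"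

definition weakly_consistent :: "real \<Rightarrow> ('n, 'e, 'x) topology_scheme \<Rightarrow> bool" where
  "weakly_consistent k G \<longleftrightarrow> structurally_consistent G \<and>
     active_link_constraint k G \<and> inactive_link_constraint k G"

end

theory Submission
  imports Defs
begin

text \<open>Every inactive link ab has a triangle c whose links ac and cb are strictly lighter than ab.
  Replacing ab by the path ac, cb and repeating on the new inactive links terminates, since
  weights strictly decrease and there are finitely many links; the result is a path without
  inactive links. Applied to every link of a physical path this yields a weak path.\<close>

definition avoids_inactive :: "('n, 'e, 'x) topology_scheme \<Rightarrow> 'e list \<Rightarrow> bool" where
  "avoids_inactive G p \<longleftrightarrow> (\<forall>e \<in> set p. state G e \<noteq> Inactive)"

lemma avoids_inactive_append [simp]:
  "avoids_inactive G (p @ q) \<longleftrightarrow> avoids_inactive G p \<and> avoids_inactive G q"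
  unfolding avoids_inactive_def by auto

lemma avoids_inactive_iff:
  "avoids_inactive G p \<longleftrightarrow> (\<forall>e \<in> set p. state G e = Active \<or> state G e = Unclassified)"
  unfolding avoids_inactive_def by (metis link_state.distinct(2,6) link_state.exhaust)

lemma is_path_append:
  "is_path G u p w \<Longrightarrow> is_path G w q v \<Longrightarrow> is_path G u (p @ q) v"
  by (induction p arbitrary: u) auto

lemma inactive_link_lighter_detour:
  assumes "inactive_link_constraint k G" and "e \<in> links G" and "state G e = Inactive"
  obtains e1 e2 where "e1 \<in> links G" "e2 \<in> links G"
    "src G e1 = src G e" "tgt G e1 = src G e2" "tgt G e2 = tgt G e"
    "weight G e1 < weight G e" "weight G e2 < weight G e"
proof -
  have "has_triangle k G e"
    using assms unfolding inactive_link_constraint_def by blast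
  then show ?thesis
    using that unfolding has_triangle_def is_triangle_def by force
qed

lemma link_bypass_avoiding_inactive:
  assumes "finite (links G)" and "inactive_link_constraint k G" and "e \<in> links G"
  shows "\<exists>p. is_path G (src G e) p (tgt G e) \<and> avoids_inactive G p"
  using assms(3)
proof (induction "card {e' \<in> links G. weight G e' < weight G e}" arbitrary: e rule: less_induct)
  case less
  show ?case
  proof (cases "state G e = Inactive")
    case False
    then show ?thesis
      using less.prems by (intro exI[of _ "[e]"]) (simp add: avoids_inactive_def)
  next
    case True
    obtain e1 e2 where e12: "e1 \<in> links G" "e2 \<in> links G"
      "src G e1 = src G e" "tgt G e1 = src G e2" "tgt G e2 = tgt G e"
      "weight G e1 < weight G e" "weight G e2 < weight G e"
      using inactive_link_lighter_detour[OF assms(2) less.prems True] by blast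
    have fewer_lighter:
      "card {e' \<in> links G. weight G e' < weight G x} < card {e' \<in> links G. weight G e' < weight G e}"
      if "x \<in> links G" "weight G x < weight G e" for x
      by (rule psubset_card_mono) (use assms(1) that in auto)
    obtain p1 where p1: "is_path G (src G e1) p1 (tgt G e1)" "avoids_inactive G p1"
      using less.hyps[OF fewer_lighter[OF e12(1,6)] e12(1)] by blast
    obtain p2 where p2: "is_path G (src G e2) p2 (tgt G e2)" "avoids_inactive G p2"
      using less.hyps[OF fewer_lighter[OF e12(2,7)] e12(2)] by blast
    have "is_path G (src G e) (p1 @ p2) (tgt G e)"
      using is_path_append[of G _ p1 _ p2] p1(1) p2(1) e12(3-5) by simp
    with p1(2) p2(2) show ?thesis by auto
  qed
qed

lemma path_bypass_avoiding_inactive: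
  assumes "finite (links G)" and "inactive_link_constraint k G" and "is_path G u p v"
  shows "\<exists>q. is_path G u q v \<and> avoids_inactive G q"
  using assms(3)
proof (induction p arbitrary: u)
  case Nil
  then show ?case by (intro exI[of _ "[]"]) (simp add: avoids_inactive_def)
next
  case (Cons e p)
  then obtain q where q: "is_path G (tgt G e) q v" "avoids_inactive G q" by auto
  obtain r where r: "is_path G (src G e) r (tgt G e)" "avoids_inactive G r"
    using link_bypass_avoiding_inactive[OF assms(1,2)] Cons.prems by auto
  show ?case
    using is_path_append[OF r(1) q(1)] r(2) q(2) Cons.prems by auto
qed

theorem theorem3:
  fixes k :: real and G :: "('n, 'e) topology"
  assumes "topology G"
    and "weakly_consistent k G"
    and "physically_connected G"
  shows "weakly_connected G"
  unfolding weakly_connected_def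
proof (intro ballI)
  fix u v assume "u \<in> nodes G" "v \<in> nodes G"
  then obtain p where "is_path G u p v"
    using assms(3) unfolding physically_connected_def by blast
  moreover have "finite (links G)"
    using assms(1) unfolding topology_def by blast
  moreover have "inactive_link_constraint k G"
    using assms(2) unfolding weakly_consistent_def by blast
  ultimately show "\<exists>p. is_path G u p v \<and> (\<forall>e\<in>set p. state G e = Active \<or> state G e = Unclassified)"
    using path_bypass_avoiding_inactive avoids_inactive_iff by metis
qed

end
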